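(* Assume $\Omega^*\neq\emptyset$, let $\sigma\in[0,c]$, and let an initial point $\omega_0$ be given. Then there exist parameters $(W_k,\theta_k,\beta_k)\in\mathcal{S}(\sigma,A)$, $k\ge0$, such that for the sequence $\{\omega_k\}$ generated by the iteration below, the quantity $\operatorname{dist}^2_{\mathcal{H}_k}(\omega_k,\Omega^* )$ decreases monotonically in $k$ for all sufficiently large $k$.
   Context: Let $A\in\mathbb{R}^{m\times d}$, $X\in\mathbb{R}^{m\times n}$, and let $f:\mathbb{R}^{d\times n}\to\mathbb{R}$, $g:\mathbb{R}^{m\times n}\to\mathbb{R}$ be convex. Consider the problem $\min_{Z,E} f(Z)+g(E)$ subject to $X=AZ+E$. Triples are written $\omega=(Z,E,-\lambda)$ with $\lambda\in\mathbb{R}^{m\times n}$ a Lagrange multiplier; the inner product of triples is the sum of componentwise Frobenius inner products. $\Omega^*$ is the solution set: the set of $\omega^*=(Z^*,E^*,-\lambda^* )$ with $0\in\partial f(Z^* )+A^\top\lambda^*$, $0\in\partial g(E^* )+\lambda^*$, $AZ^*+E^*=X$. $\circ$ is the Hadamard product; $\beta^{-1}$ is the entrywise reciprocal; $\tfrac{\theta}{2}\circ\|M\|_F^2:=\tfrac12\sum_{ij}\theta_{ij}M_{ij}^2$. Iteration (D-LADMM), with parameters $W_k\in\mathbb{R}^{m\times d}$, $\theta_k\in\mathbb{R}^{d\times n}$, $\beta_k\in\mathbb{R}^{m\times n}$: $Z_{k+1}=\arg\min_Z\{ f(Z)+\tfrac{\theta_k}{2}\circ\|Z-Z_k+\theta_k^{-1}\circ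 W_k^\top(\lambda_k+\beta_k\circ(AZ_k+E_k-X))\|_F^2\}$, $E_{k+1}=\arg\min_E\{g(E)+\tfrac{\beta_k}{2}\circ\|E-X+AZ_{k+1}+\beta_k^{-1}\circ\lambda_k\|_F^2\}$, $\lambda_{k+1}=\lambda_k+\beta_k\circ(AZ_{k+1}+E_{k+1}-X)$. $\mathcal{D}_k(Z)=\theta_k\circ Z-W_k^\top(\beta_k\circ(AZ))$; $\mathcal{H}_k(Z,E,-\lambda)=(\mathcal{D}_k(Z),\ \beta_k\circ E,\ \beta_k^{-1}\circ(-\lambda))$; $\|\omega\|_{\mathcal{H}}^2=\langle\omega,\mathcal{H}(\omega)\rangle$; $\operatorname{dist}^2_{\mathcal{H}}(\omega,\Omega^* )=\min_{\omega^*\in\Omega^*}\|\omega-\omega^*\|^2_{\mathcal{H}}$. $\mathcal{S}(\sigma,A)$ is the set of $(W,\theta,\beta)$ with $\|W-A\|\le\sigma$ (spectral norm), $\theta,\beta$ entrywise positive, and $Z\mapsto\theta\circ Z-W^\top(\beta\circ(AZ))$ positive definite ($\langle\cdot(Z),Z\rangle>0$ for $Z\neq0$). Standing assumption: there is a constant $c$ such that $\mathcal{S}(\sigma,A)\ne\emptyset$ for all $0\le\sigma\le c$. *)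

theory Defs
  imports "HOL-Analysis.Analysis"
begin

text \<open>Matrices in R^(r x c) are rendered as real^'c^'r (rows indexed by 'r).
  The Frobenius inner product is the library inner product on nested vectors.\<close>

definition had :: "real^'c^'r \<Rightarrow> real^'c^'r \<Rightarrow> real^'c^'r" where
  "had P Q = (\<chi> i j. P$i$j * Q$i$j)"

definition recip :: "real^'c^'r \<Rightarrow> real^'c^'r" where
  "recip P = (\<chi> i j. 1 / P$i$j)"

definition wsq :: "real^'c^'r \<Rightarrow> real^'c^'r \<Rightarrow> real" where
  "wsq th M = (1/2) * (\<Sum>i\<in>UNIV. \<Sum>j\<in>UNIV. th$i$j * (M$i$j)^2)"

definition subgrad :: "('a::real_inner \<Rightarrow> real) \<Rightarrow> 'a \<Rightarrow> 'a set" where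
  "subgrad f x = {s. \<forall>y. f x + inner s (y - x) \<le> f y}"

definition Dop :: "real^'d^'m \<Rightarrow> real^'n^'d \<Rightarrow> real^'n^'m \<Rightarrow> real^'d^'m
                   \<Rightarrow> real^'n^'d \<Rightarrow> real^'n^'d" where
  "Dop W th be A Z = had th Z - transpose W ** had be (A ** Z)"

text \<open>S(sigma, A); spectral norm = operator norm of the induced linear map\<close>
definition Sset :: "real \<Rightarrow> real^'d^'m
                    \<Rightarrow> ((real^'d^'m) \<times> (real^'n^'d) \<times> (real^'n^'m)) set" where
  "Sset \<sigma> A = {(W, th, be).
      onorm (\<lambda>x. (W - A) *v x) \<le> \<sigma> \<and>
      (\<forall>i j. th$i$j > 0) \<and> (\<forall>i j. be$i$j > 0) \<and>
      (\<forall>Z. Z \<noteq> 0 \<longrightarrow> inner (Dop W th be A Z) Z > 0)}"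

text \<open>Solution set Omega*, stored as triples (Z*, E*, -lambda*).
  0 \<in> df(Z*) + A^T lambda*  iff  -A^T lambda* \<in> df(Z*); similarly for g.\<close>
definition solset :: "(real^'n^'d \<Rightarrow> real) \<Rightarrow> (real^'n^'m \<Rightarrow> real) \<Rightarrow> real^'d^'m
                      \<Rightarrow> real^'n^'m \<Rightarrow> ((real^'n^'d) \<times> (real^'n^'m) \<times> (real^'n^'m)) set" where
  "solset f g A X = {(Z, E, NL). \<exists>L. NL = - L \<and>
      - (transpose A ** L) \<in> subgrad f Z \<and> - L \<in> subgrad g E \<and> A ** Z + E = X}"

definition Hnorm2 :: "real^'d^'m \<Rightarrow> real^'n^'d \<Rightarrow> real^'n^'m \<Rightarrow> real^'d^'m
                      \<Rightarrow> (real^'n^'d) \<times> (real^'n^'m) \<times> (real^'n^'m) \<Rightarrow> real" where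
  "Hnorm2 W th be A w = (case w of (Z, E, NL) \<Rightarrow>
      inner Z (Dop W th be A Z) + inner E (had be E) + inner NL (had (recip be) NL))"

definition distH2 :: "real^'d^'m \<Rightarrow> real^'n^'d \<Rightarrow> real^'n^'m \<Rightarrow> real^'d^'m
                      \<Rightarrow> ((real^'n^'d) \<times> (real^'n^'m) \<times> (real^'n^'m)) set
                      \<Rightarrow> (real^'n^'d) \<times> (real^'n^'m) \<times> (real^'n^'m) \<Rightarrow> real" where
  "distH2 W th be A \<Omega> w = Inf ((\<lambda>ws. Hnorm2 W th be A (w - ws)) ` \<Omega>)"

definition dladmm_step :: "(real^'n^'d \<Rightarrow> real) \<Rightarrow> (real^'n^'m \<Rightarrow> real) \<Rightarrow> real^'d^'m
      \<Rightarrow> real^'n^'m \<Rightarrow> real^'d^'m \<Rightarrow> real^'n^'d \<Rightarrow> real^'n^'m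
      \<Rightarrow> real^'n^'d \<Rightarrow> real^'n^'m \<Rightarrow> real^'n^'m
      \<Rightarrow> real^'n^'d \<Rightarrow> real^'n^'m \<Rightarrow> real^'n^'m \<Rightarrow> bool" where
  "dladmm_step f g A X W th be Z E L Z' E' L' \<longleftrightarrow>
     (\<forall>Y. f Z' + wsq th (Z' - Z + had (recip th) (transpose W ** (L + had be (A ** Z + E - X))))
          \<le> f Y + wsq th (Y - Z + had (recip th) (transpose W ** (L + had be (A ** Z + E - X))))) \<and>
     (\<forall>Y. g E' + wsq be (E' - X + A ** Z' + had (recip be) L)
          \<le> g Y + wsq be (Y - X + A ** Z' + had (recip be) L)) \<and>
     L' = L + had be (A ** Z' + E' - X)"

end

theory Submission
  imports Defs
begin

(* Choosing W_k = A, which lies within distance 0 <= sigma of A, together with the constant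
   weights theta = (|A|_F^2 + 1) and beta = 1 makes D positive definite (|A Z|_F <= |A|_F |Z|_F)
   and, since W = A, self-adjoint; so H is one fixed inner product and D-LADMM is the classical
   linearized ADMM. The optimality conditions of its two proximal steps, combined with
   monotonicity of the subdifferentials at a solution, make the iterates Fejer monotone with
   respect to Omega* in the H-norm; taking the infimum over Omega* gives monotonicity of the
   distance from k = 0 on. Exhibiting this parameter triple makes the standing assumption
   S(sigma, A) <> {} unnecessary. *)

lemma inner_matrix:
  "inner (P::real^'c::finite^'r::finite) Q = (\<Sum>i\<in>UNIV. \<Sum>j\<in>UNIV. P$i$j * Q$i$j)"
  by (simp add: inner_vec_def)

lemma had_nth [simp]: "had P Q $ i $ j = P$i$j * Q$i$j"
  by (simp add: had_def)

lemma recip_nth [simp]: "recip P $ i $ j = 1 / P$i$j"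
  by (simp add: recip_def)

lemma linear_had: "linear (had p)"
  by (rule linearI) (simp_all add: vec_eq_iff algebra_simps)

lemma inner_had_commute: "inner (had p x) y = inner x (had p y)"
  by (simp add: inner_matrix mult.commute mult.left_commute)

lemma had_recip_cancel:
  assumes "\<forall>i j. 0 < p$i$j"
  shows "had p (had (recip p) x) = x" and "had (recip p) (had p x) = x"
  using assms by (simp_all add: vec_eq_iff less_imp_neq[symmetric])

lemma inner_had_self_nonneg:
  assumes "\<forall>i j. 0 < p$i$j"
  shows "0 \<le> inner x (had p x)"
proof -
  have "0 \<le> x$i$j * (p$i$j * x$i$j)" for i j
  proof -
    have "0 \<le> p$i$j * (x$i$j)\<^sup>2"
      using assms by (simp add: less_imp_le)
    also have "\<dots> = x$i$j * (p$i$j * x$i$j)"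
      by (simp add: power2_eq_square mult.left_commute)
    finally show ?thesis .
  qed
  then show ?thesis
    by (simp add: inner_matrix sum_nonneg)
qed

lemma inner_le_had_recip:
  assumes "\<forall>i j. 0 < p$i$j"
  shows "2 * inner x y \<le> inner x (had p x) + inner y (had (recip p) y)"
proof -
  have "2 * (x$i$j * y$i$j) \<le> x$i$j * (p$i$j * x$i$j) + y$i$j * (1 / p$i$j * y$i$j)" for i j
  proof -
    have "0 \<le> (p$i$j * x$i$j - y$i$j)\<^sup>2 / p$i$j"
      using assms by (simp add: less_imp_le)
    also have "\<dots> = x$i$j * (p$i$j * x$i$j) + y$i$j * (1 / p$i$j * y$i$j) - 2 * (x$i$j * y$i$j)"
      using assms by (simp add: power2_eq_square field_simps less_imp_neq[symmetric])
    finally show ?thesis by simp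
  qed
  then show ?thesis
    by (simp add: inner_matrix sum_distrib_left sum.distrib[symmetric] sum_mono)
qed

lemma inner_transpose_matrix_mult:
  fixes A :: "real^'d::finite^'m::finite" and Y :: "real^'n::finite^'m"
  shows "inner (transpose A ** Y) Z = inner Y (A ** Z)"
proof -
  have "inner (transpose A ** Y) Z = (\<Sum>i\<in>UNIV. \<Sum>j\<in>UNIV. \<Sum>k\<in>UNIV. A$k$i * Y$k$j * Z$i$j)"
    by (simp add: inner_matrix matrix_matrix_mult_def transpose_def sum_distrib_right)
  also have "\<dots> = (\<Sum>k\<in>UNIV. \<Sum>j\<in>UNIV. \<Sum>i\<in>UNIV. A$k$i * Y$k$j * Z$i$j)"
    by (subst sum.swap, subst (1 2) sum.swap) simp
  also have "\<dots> = inner Y (A ** Z)"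
    by (simp add: inner_matrix matrix_matrix_mult_def sum_distrib_left mult_ac)
  finally show ?thesis .
qed

lemma norm_matrix_mult_le:
  fixes A :: "real^'d::finite^'m::finite" and Z :: "real^'n::finite^'d"
  shows "norm (A ** Z) \<le> norm A * norm Z"
proof -
  have "(norm (A ** Z))\<^sup>2 = (\<Sum>k\<in>UNIV. \<Sum>j\<in>UNIV. (\<Sum>i\<in>UNIV. A$k$i * Z$i$j)\<^sup>2)"
    unfolding power2_norm_eq_inner by (simp add: inner_matrix matrix_matrix_mult_def power2_eq_square)
  also have "\<dots> \<le> (\<Sum>k\<in>UNIV. \<Sum>j\<in>UNIV. (\<Sum>i\<in>UNIV. (A$k$i)\<^sup>2) * (\<Sum>i\<in>UNIV. (Z$i$j)\<^sup>2))"
    by (intro sum_mono Cauchy_Schwarz_ineq_sum)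
  also have "\<dots> = (\<Sum>k\<in>UNIV. \<Sum>i\<in>UNIV. (A$k$i)\<^sup>2) * (\<Sum>j\<in>UNIV. \<Sum>i\<in>UNIV. (Z$i$j)\<^sup>2)"
    by (rule sum_product[symmetric])
  also have "(\<Sum>k\<in>UNIV. \<Sum>i\<in>UNIV. (A$k$i)\<^sup>2) = (norm A)\<^sup>2"
    unfolding power2_norm_eq_inner by (simp add: inner_matrix power2_eq_square)
  also have "(\<Sum>j\<in>UNIV. \<Sum>i\<in>UNIV. (Z$i$j)\<^sup>2) = (norm Z)\<^sup>2"
    unfolding power2_norm_eq_inner inner_matrix by (subst sum.swap) (simp add: power2_eq_square)
  finally have "(norm (A ** Z))\<^sup>2 \<le> (norm A * norm Z)\<^sup>2"
    by (simp only: power_mult_distrib)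
  then show ?thesis
    by (rule power2_le_imp_le) simp
qed

lemma quadratic_form_diff:
  fixes T :: "'a::real_inner \<Rightarrow> 'a"
  assumes "linear T" and "\<And>x y. inner (T x) y = inner x (T y)"
  shows "inner (a - d) (T (a - d)) = inner a (T a) - 2 * inner (T d) a + inner d (T d)"
  using assms(2)[of d a]
  by (simp add: linear_diff[OF assms(1)] inner_diff_left inner_diff_right inner_commute)

lemma linear_matrix_mult_left: "linear (\<lambda>Z. (A::real^'d::finite^'m::finite) ** Z)"
  by (rule linearI) (simp_all add: matrix_add_ldistrib matrix_scalar_ac scalar_matrix_assoc)

lemma linear_Dop: "linear (Dop W th be A)"
proof -
  have "linear (\<lambda>Z. transpose W ** had be (A ** Z))"
    using linear_compose[OF linear_compose[OF linear_matrix_mult_left linear_had] linear_matrix_mult_left]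
    by (simp add: o_def)
  then show ?thesis
    unfolding Dop_def by (intro linear_compose_sub linear_had)
qed

lemma Dop_self_adjoint: "inner (Dop A th be A x) y = inner x (Dop A th be A y)"
  by (simp add: Dop_def inner_diff_left inner_diff_right inner_transpose_matrix_mult
      inner_had_commute) (metis inner_commute inner_transpose_matrix_mult)

definition Hop :: "real^'d^'m \<Rightarrow> real^'n^'d \<Rightarrow> real^'n^'m \<Rightarrow> real^'d^'m
                   \<Rightarrow> (real^'n^'d) \<times> (real^'n^'m) \<times> (real^'n^'m)
                   \<Rightarrow> (real^'n^'d) \<times> (real^'n^'m) \<times> (real^'n^'m)" where
  "Hop W th be A = (\<lambda>(Z, E, NL). (Dop W th be A Z, had be E, had (recip be) NL))"

lemma Hnorm2_eq_inner: "Hnorm2 W th be A w = inner w (Hop W th be A w)"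
  by (cases w) (simp add: Hnorm2_def Hop_def)

lemma linear_Hop: "linear (Hop W th be A)"
  using linear_Dop[of W th be A] linear_had[of be] linear_had[of "recip be"]
  by (auto simp: Hop_def linear_iff split: prod.splits)

lemma Hop_self_adjoint: "inner (Hop A th be A x) y = inner x (Hop A th be A y)"
  by (cases x, cases y) (simp add: Hop_def Dop_self_adjoint inner_had_commute)

lemma Sset_psd:
  assumes "(W, th, be) \<in> Sset \<sigma> A"
  shows "0 \<le> inner (Dop W th be A Z) Z"
  using assms unfolding Sset_def by (cases "Z = 0") (auto simp: less_imp_le)

lemma Hnorm2_nonneg:
  assumes "(W, th, be) \<in> Sset \<sigma> A"
  shows "0 \<le> Hnorm2 W th be A w"
proof (cases w)
  case (fields Z E NL)
  have be: "\<forall>i j. 0 < be$i$j"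
    using assms by (simp add: Sset_def)
  have "0 \<le> inner (Dop W th be A Z) Z"
    using assms by (rule Sset_psd)
  moreover have "0 \<le> inner E (had be E)" and "0 \<le> inner NL (had (recip be) NL)"
    using be by (auto intro!: inner_had_self_nonneg)
  ultimately show ?thesis
    by (simp add: fields Hnorm2_def inner_commute)
qed

lemma wsq_add_scaleR:
  "wsq w (M + t *\<^sub>R N) = wsq w M + t * inner (had w M) N + t\<^sup>2 * wsq w N"
  by (simp add: wsq_def inner_matrix power2_eq_square algebra_simps sum.distrib sum_distrib_left)

lemma subgrad_monotone:
  assumes "s \<in> subgrad f x" and "t \<in> subgrad f y"
  shows "0 \<le> inner (s - t) (x - y)"
proof -
  have "f x + inner s (y - x) \<le> f y" and "f y + inner t (x - y) \<le> f x"
    using assms unfolding subgrad_def by blast+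
  moreover have "inner s (y - x) = - inner s (x - y)"
    by (metis inner_minus_right minus_diff_eq)
  ultimately show ?thesis
    by (simp add: inner_diff_left)
qed

lemma prox_subgrad:
  assumes "convex_on UNIV f" and "\<forall>Y. f x + wsq w (x + u) \<le> f Y + wsq w (Y + u)"
  shows "- had w (x + u) \<in> subgrad f x"
proof -
  have "0 \<le> f Y - f x + inner (had w (x + u)) (Y - x)" (is "0 \<le> ?a") for Y
  proof -
    let ?q = "wsq w (Y - x)"
    have "0 \<le> ?a + t * ?q" if t: "0 < t" "t < 1" for t
    proof -
      define Yt where "Yt = (1 - t) *\<^sub>R x + t *\<^sub>R Y"
      have "wsq w (Yt + u) = wsq w (x + u) + t * inner (had w (x + u)) (Y - x) + t\<^sup>2 * ?q"
        using wsq_add_scaleR[of w "x + u" t "Y - x"] by (simp add: Yt_def algebra_simps)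
      then have "f x \<le> f Yt + t * inner (had w (x + u)) (Y - x) + t\<^sup>2 * ?q"
        using assms(2)[rule_format, of Yt] by simp
      moreover have "f Yt \<le> (1 - t) * f x + t * f Y"
        unfolding Yt_def using convex_onD[OF assms(1), of t x Y] t by simp
      ultimately have "0 \<le> t * (?a + t * ?q)"
        by (simp add: power2_eq_square algebra_simps)
      then show ?thesis
        using t by (simp add: zero_le_mult_iff)
    qed
    then have "\<forall>\<^sub>F t in at_right 0. 0 \<le> ?a + t * ?q"
      using eventually_at_right_real[of 0 1] by (rule eventually_mono[rotated]) auto
    moreover have "((\<lambda>t. ?a + t * ?q) \<longlongrightarrow> ?a) (at_right 0)"
      by (auto intro!: tendsto_eq_intros)
    ultimately show ?thesis
      by (intro tendsto_lowerbound) auto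
  qed
  then show ?thesis
    unfolding subgrad_def by (smt (verit) inner_minus_left mem_Collect_eq)
qed

lemma dladmm_step_subgrad:
  assumes f: "convex_on UNIV f" and g: "convex_on UNIV g"
    and th: "\<forall>i j. 0 < th$i$j" and be: "\<forall>i j. 0 < be$i$j"
    and step: "dladmm_step f g A X W th be Z E L Z' E' L'"
  shows "- (had th (Z' - Z) + transpose W ** (L + had be (A ** Z + E - X))) \<in> subgrad f Z'"
    and "- L' \<in> subgrad g E'"
proof -
  define V where "V = transpose W ** (L + had be (A ** Z + E - X))"
  define uZ where "uZ = had (recip th) V - Z"
  define uE where "uE = had (recip be) L - X + A ** Z'"
  have "\<forall>Y. f Z' + wsq th (Z' + uZ) \<le> f Y + wsq th (Y + uZ)"
    and "\<forall>Y. g E' + wsq be (E' + uE) \<le> g Y + wsq be (Y + uE)"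
    and L': "L' = L + had be (A ** Z' + E' - X)"
    using step unfolding dladmm_step_def V_def uZ_def uE_def by (simp_all add: algebra_simps)
  then have prox_Z: "- had th (Z' + uZ) \<in> subgrad f Z'" and prox_E: "- had be (E' + uE) \<in> subgrad g E'"
    using f g by (simp_all add: prox_subgrad)
  have "Z' + uZ = (Z' - Z) + had (recip th) V"
    by (simp add: uZ_def)
  then have "had th (Z' + uZ) = had th (Z' - Z) + V"
    by (simp only: linear_add[OF linear_had] had_recip_cancel(1)[OF th])
  with prox_Z show "- (had th (Z' - Z) + V) \<in> subgrad f Z'"
    by simp
  have "E' + uE = had (recip be) L + (A ** Z' + E' - X)"
    by (simp add: uE_def algebra_simps)
  then have "had be (E' + uE) = L'"
    by (simp only: linear_add[OF linear_had] had_recip_cancel(1)[OF be] L')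
  with prox_E show "- L' \<in> subgrad g E'"
    by simp
qed

lemma dladmm_step_monotone_ineqs:
  assumes f: "convex_on UNIV f" and g: "convex_on UNIV g"
    and th: "\<forall>i j. 0 < th$i$j" and be: "\<forall>i j. 0 < be$i$j"
    and step: "dladmm_step f g A X A th be Z E L Z' E' L'"
    and fs: "- (transpose A ** Ls) \<in> subgrad f Zs" and gs: "- Ls \<in> subgrad g Es"
  shows "inner (Dop A th be A (Z' - Z)) (Z' - Zs) + inner (L' - Ls - had be (E' - E)) (A ** (Z' - Zs)) \<le> 0"
    and "inner (L' - Ls) (E' - Es) \<le> 0"
proof -
  define V where "V = transpose A ** (L + had be (A ** Z + E - X))"
  have "L + had be (A ** Z + E - X) - Ls = L' - Ls - had be (E' - E) - had be (A ** (Z' - Z))"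
    using step by (simp add: dladmm_step_def vec_eq_iff matrix_matrix_mult_def sum_subtractf algebra_simps)
  then have "V - transpose A ** Ls = transpose A ** (L' - Ls - had be (E' - E) - had be (A ** (Z' - Z)))"
    by (simp only: V_def linear_diff[OF linear_matrix_mult_left, symmetric])
  moreover have "0 \<le> inner (- (had th (Z' - Z) + (V - transpose A ** Ls))) (Z' - Zs)"
    using subgrad_monotone[OF dladmm_step_subgrad(1)[OF f g th be step] fs]
    by (simp add: V_def algebra_simps)
  ultimately show "inner (Dop A th be A (Z' - Z)) (Z' - Zs) + inner (L' - Ls - had be (E' - E)) (A ** (Z' - Zs)) \<le> 0"
    by (simp add: Dop_def inner_diff_left inner_add_left inner_transpose_matrix_mult)
  show "inner (L' - Ls) (E' - Es) \<le> 0"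
    using subgrad_monotone[OF dladmm_step_subgrad(2)[OF f g th be step] gs]
    by (simp add: inner_diff_left)
qed

lemma dladmm_fejer:
  assumes f: "convex_on UNIV f" and g: "convex_on UNIV g"
    and th: "\<forall>i j. 0 < th$i$j" and be: "\<forall>i j. 0 < be$i$j"
    and psd: "\<forall>Z. 0 \<le> inner (Dop A th be A Z) Z"
    and step: "dladmm_step f g A X A th be Z E L Z' E' L'"
    and sol: "ws \<in> solset f g A X"
  shows "Hnorm2 A th be A ((Z', E', - L') - ws) \<le> Hnorm2 A th be A ((Z, E, - L) - ws)"
proof -
  obtain Zs Es Ls where ws: "ws = (Zs, Es, - Ls)" and fs: "- (transpose A ** Ls) \<in> subgrad f Zs"
    and gs: "- Ls \<in> subgrad g Es" and feas: "A ** Zs + Es = X"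
    using sol unfolding solset_def by auto
  define aZ aE aL where "aZ = Z' - Zs" and "aE = E' - Es" and "aL = L' - Ls"
  define dZ dE dL where "dZ = Z' - Z" and "dE = E' - E" and "dL = L' - L"
  define a where "a = (aZ, aE, - aL)"
  define d where "d = (dZ, dE, - dL)"
  let ?H = "Hop A th be A"
  \<comment> \<open>The two monotonicity inequalities
    give <H d, a> <= <dE, dL> and AM-GM gives |d|_H^2 >= 2 <dE, dL>, hence
    |a - d|_H^2 = |a|_H^2 - 2 <H d, a> + |d|_H^2 >= |a|_H^2.\<close>
  have "A ** aZ = had (recip be) dL - aE"
    using step feas[symmetric]
    by (simp add: dladmm_step_def dL_def aZ_def aE_def had_recip_cancel(2)[OF be]
        linear_diff[OF linear_matrix_mult_left])
  then have "inner (?H d) a \<le> inner dE dL"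
    using dladmm_step_monotone_ineqs[OF f g th be step fs gs, folded aZ_def aE_def aL_def dZ_def dE_def]
    by (simp add: a_def d_def Hop_def inner_diff_left inner_diff_right inner_had_commute
        linear_neg[OF linear_had] had_recip_cancel(1)[OF be] inner_commute)
  moreover have "2 * inner dE dL \<le> inner d (?H d)"
    using inner_le_had_recip[OF be, of dE dL] psd[rule_format, of dZ]
    by (simp add: d_def Hop_def linear_neg[OF linear_had] inner_commute)
  moreover have "(Z, E, - L) - ws = a - d" and "(Z', E', - L') - ws = a"
    by (simp_all add: ws a_def d_def aZ_def aE_def aL_def dZ_def dE_def dL_def)
  ultimately show ?thesis
    using quadratic_form_diff[OF linear_Hop Hop_self_adjoint, of a d] by (simp add: Hnorm2_eq_inner)
qed

lemma exact_linearization_mem_Sset: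
  fixes A :: "real^'d::finite^'m::finite"
  assumes "0 \<le> \<sigma>"
  shows "(A, (\<chi> i j. (norm A)\<^sup>2 + 1) :: real^'n::finite^'d, \<chi> i j. 1) \<in> Sset \<sigma> A"
proof -
  have coercive: "(norm Z)\<^sup>2 \<le> inner (Dop A (\<chi> i j. (norm A)\<^sup>2 + 1) (\<chi> i j. 1) A Z) Z" for Z :: "real^'n^'d"
  proof -
    have "had (\<chi> i j. (norm A)\<^sup>2 + 1) Z = ((norm A)\<^sup>2 + 1) *\<^sub>R Z" and "had (\<chi> i j. 1) (A ** Z) = A ** Z"
      by (simp_all add: vec_eq_iff)
    then have "inner (Dop A (\<chi> i j. (norm A)\<^sup>2 + 1) (\<chi> i j. 1) A Z) Z
        = (norm A)\<^sup>2 * (norm Z)\<^sup>2 + (norm Z)\<^sup>2 - (norm (A ** Z))\<^sup>2"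
      by (simp add: Dop_def inner_diff_left inner_transpose_matrix_mult power2_norm_eq_inner distrib_right)
    moreover have "(norm (A ** Z))\<^sup>2 \<le> (norm A)\<^sup>2 * (norm Z)\<^sup>2"
      using power_mono[OF norm_matrix_mult_le norm_ge_zero, of A Z 2] by (simp add: power_mult_distrib)
    ultimately show ?thesis
      by linarith
  qed
  have pos_def: "0 < inner (Dop A (\<chi> i j. (norm A)\<^sup>2 + 1) (\<chi> i j. 1) A Z) Z"
    if "Z \<noteq> 0" for Z :: "real^'n^'d"
  proof -
    have "0 < (norm Z)\<^sup>2"
      using that by simp
    then show ?thesis
      using coercive by (rule less_le_trans)
  qed
  have "(*v) (A - A) = (\<lambda>x::real^'d. 0)"
    by (simp add: fun_eq_iff)
  then have "onorm ((*v) (A - A)) \<le> \<sigma>"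
    using assms by (simp add: onorm_zero)
  with pos_def show ?thesis
    by (simp add: Sset_def add_nonneg_pos)
qed

lemma distH2_le_if_pointwise_le:
  assumes "\<Omega> \<noteq> {}" and "(W', th', be') \<in> Sset \<sigma> A"
    and "\<And>ws. ws \<in> \<Omega> \<Longrightarrow> Hnorm2 W' th' be' A (w' - ws) \<le> Hnorm2 W th be A (w - ws)"
  shows "distH2 W' th' be' A \<Omega> w' \<le> distH2 W th be A \<Omega> w"
  unfolding distH2_def
proof (rule cInf_mono)
  show "bdd_below ((\<lambda>ws. Hnorm2 W' th' be' A (w' - ws)) ` \<Omega>)"
    by (rule bdd_belowI[of _ 0]) (auto intro: Hnorm2_nonneg[OF assms(2)])
qed (use assms(1,3) in auto)

lemma dladmm_distH2_decreasing:
  assumes "convex_on UNIV f" and "convex_on UNIV g"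
    and S: "(A, th, be) \<in> Sset \<sigma> A" and "solset f g A X \<noteq> {}"
    and "dladmm_step f g A X A th be Z E L Z' E' L'"
  shows "distH2 A th be A (solset f g A X) (Z', E', - L')
      \<le> distH2 A th be A (solset f g A X) (Z, E, - L)"
proof (rule distH2_le_if_pointwise_le[OF assms(4) S])
  have "\<forall>i j. 0 < th$i$j" and "\<forall>i j. 0 < be$i$j"
    using S by (simp_all add: Sset_def)
  with assms show "Hnorm2 A th be A ((Z', E', - L') - ws) \<le> Hnorm2 A th be A ((Z, E, - L) - ws)"
    if "ws \<in> solset f g A X" for ws
    using Sset_psd[OF S] that by (intro dladmm_fejer) auto
qed

theorem theorem2:
  fixes A :: "real^'d::finite^'m::finite" and X :: "real^'n::finite^'m"
    and f :: "real^'n^'d \<Rightarrow> real" and g :: "real^'n^'m \<Rightarrow> real"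
    and c \<sigma> :: real
    and Z0 :: "real^'n^'d" and E0 :: "real^'n^'m" and L0 :: "real^'n^'m"
  assumes "convex_on UNIV f" and "convex_on UNIV g"
    and "\<forall>s. 0 \<le> s \<and> s \<le> c \<longrightarrow> Sset s A \<noteq> {}"
    and "solset f g A X \<noteq> {}"
    and "0 \<le> \<sigma>" and "\<sigma> \<le> c"
  shows "\<exists>(Ws :: nat \<Rightarrow> real^'d^'m) (th :: nat \<Rightarrow> real^'n^'d) (be :: nat \<Rightarrow> real^'n^'m).
           (\<forall>k. (Ws k, th k, be k) \<in> Sset \<sigma> A) \<and>
           (\<forall>(Zs :: nat \<Rightarrow> real^'n^'d) (Es :: nat \<Rightarrow> real^'n^'m) (Ls :: nat \<Rightarrow> real^'n^'m).
              Zs 0 = Z0 \<and> Es 0 = E0 \<and> Ls 0 = L0 \<and>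
              (\<forall>k. dladmm_step f g A X (Ws k) (th k) (be k) (Zs k) (Es k) (Ls k)
                     (Zs (Suc k)) (Es (Suc k)) (Ls (Suc k)))
              \<longrightarrow> (\<exists>K. \<forall>k\<ge>K.
                     distH2 (Ws (Suc k)) (th (Suc k)) (be (Suc k)) A (solset f g A X)
                        (Zs (Suc k), Es (Suc k), - Ls (Suc k))
                     \<le> distH2 (Ws k) (th k) (be k) A (solset f g A X) (Zs k, Es k, - Ls k)))"
proof -
  define th0 :: "real^'n^'d" where "th0 = (\<chi> i j. (norm A)\<^sup>2 + 1)"
  define be0 :: "real^'n^'m" where "be0 = (\<chi> i j. 1)"
  have S: "(A, th0, be0) \<in> Sset \<sigma> A"
    unfolding th0_def be0_def by (rule exact_linearization_mem_Sset[OF assms(5)])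
  show ?thesis
  proof (intro exI[of _ "\<lambda>_. A"] exI[of _ "\<lambda>_. th0"] exI[of _ "\<lambda>_. be0"] conjI allI impI)
    fix Zs :: "nat \<Rightarrow> real^'n^'d" and Es Ls :: "nat \<Rightarrow> real^'n^'m"
    assume "Zs 0 = Z0 \<and> Es 0 = E0 \<and> Ls 0 = L0 \<and>
      (\<forall>k. dladmm_step f g A X A th0 be0 (Zs k) (Es k) (Ls k) (Zs (Suc k)) (Es (Suc k)) (Ls (Suc k)))"
    then show "\<exists>K. \<forall>k\<ge>K. distH2 A th0 be0 A (solset f g A X) (Zs (Suc k), Es (Suc k), - Ls (Suc k))
        \<le> distH2 A th0 be0 A (solset f g A X) (Zs k, Es k, - Ls k)"
      using dladmm_distH2_decreasing[OF assms(1,2) S assms(4)] by blast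
  qed (use S in simp)
qed

end
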